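(* Let $0\le a<b\le1$, $A=(a,b)$, and $X_{i,j}=\mu_j+\sigma_j(\cos(\gamma_j)V_i+\sin(\gamma_j)W_i)$, $j=1,2$, with $\mu_j\in\mathbb{R}$, $\sigma_j>0$, $\gamma_j\in[-\pi,\pi)$. Then $\hat\mu_{A,j}\to\mu_{A,j}$ ($j=1,2$) and $\hat r_A\to r_A$ in probability as $n\to\infty$.
   Context: $(V_i,W_i)_{i\ge1}$ are i.i.d., with $V_i,W_i$ independent standard normal. For fixed $n$, $X_{(i)}=(X_{(i),1},X_{(i),2})$ is the observation whose $V$-value is the $i$-th smallest among $V_1,\dots,V_n$. $\Phi$ is the standard normal CDF, $[x]$ the integer part, $m_n=[nb]-[na]$, $\hat\mu_{A,j}=\frac1{m_n}\sum_{i=[na]+1}^{[nb]}X_{(i),j}$, $\hat r_A=\frac1{m_n}\sum_{i=[na]+1}^{[nb]}(X_{(i),1}-\hat\mu_{A,1})(X_{(i),2}-\hat\mu_{A,2})$. With $A_V=(\Phi^{-1}(a),\Phi^{-1}(b))$, $\lambda_{A,1}=\mathbb{E}[V_1\mid V_1\in A_V]$, $\lambda_{A,2}=\mathbb{E}[V_1^2\mid V_1\in A_V]$: $\mu_{A,j}=\mu_j+\sigma_j\cos(\gamma_j)\lambda_{A,1}$ and $r_A=\sigma_1\sigma_2(\cos\gamma_1\cos\gamma_2(\lambda_{A,2}-\lambda_{A,1}^2)+\sin\gamma_1\sin\gamma_2)$. *)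

theory Defs
  imports "HOL-Probability.Probability"
begin

definition Phi :: "real \<Rightarrow> real" where
  "Phi x = (LBINT t:{..x}. std_normal_density t)"

text \<open>A_V = (Phi^-1(a), Phi^-1(b)), written as the preimage of (a,b) under Phi
  (Phi is a strictly increasing bijection from R onto (0,1); Phi^-1(0) = -infinity,
  Phi^-1(1) = +infinity).\<close>
definition A_V :: "real \<Rightarrow> real \<Rightarrow> real set" where
  "A_V a b = {x. a < Phi x \<and> Phi x < b}"

definition lam :: "nat \<Rightarrow> real \<Rightarrow> real \<Rightarrow> real" where
  "lam k a b = (LBINT x:A_V a b. x ^ k * std_normal_density x)
             / (LBINT x:A_V a b. std_normal_density x)"

definition ord_idx :: "(nat \<Rightarrow> real) \<Rightarrow> nat \<Rightarrow> nat list" where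
  "ord_idx v n = sort_key v [1..<n+1]"

text \<open>Concomitant: x_(i), the x-value of the observation whose v-value is the i-th smallest (i \<ge> 1).\<close>
definition conc :: "(nat \<Rightarrow> real) \<Rightarrow> (nat \<Rightarrow> real) \<Rightarrow> nat \<Rightarrow> nat \<Rightarrow> real" where
  "conc v x n i = x (ord_idx v n ! (i - 1))"

definition trim_idx :: "real \<Rightarrow> real \<Rightarrow> nat \<Rightarrow> nat set" where
  "trim_idx a b n = {nat \<lfloor>real n * a\<rfloor> + 1 .. nat \<lfloor>real n * b\<rfloor>}"

definition m_n :: "real \<Rightarrow> real \<Rightarrow> nat \<Rightarrow> nat" where
  "m_n a b n = nat \<lfloor>real n * b\<rfloor> - nat \<lfloor>real n * a\<rfloor>"

definition trim_mean :: "(nat \<Rightarrow> real) \<Rightarrow> (nat \<Rightarrow> real) \<Rightarrow> real \<Rightarrow> real \<Rightarrow> nat \<Rightarrow> real" where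
  "trim_mean v x a b n = (\<Sum>i\<in>trim_idx a b n. conc v x n i) / real (m_n a b n)"

definition trim_cov :: "(nat \<Rightarrow> real) \<Rightarrow> (nat \<Rightarrow> real) \<Rightarrow> (nat \<Rightarrow> real) \<Rightarrow> real \<Rightarrow> real \<Rightarrow> nat \<Rightarrow> real" where
  "trim_cov v x y a b n =
     (\<Sum>i\<in>trim_idx a b n. (conc v x n i - trim_mean v x a b n) * (conc v y n i - trim_mean v y a b n))
       / real (m_n a b n)"

definition conv_in_prob :: "'a measure \<Rightarrow> (nat \<Rightarrow> 'a \<Rightarrow> real) \<Rightarrow> real \<Rightarrow> bool" where
  "conv_in_prob M Y c \<longleftrightarrow> (\<forall>n. Y n \<in> borel_measurable M) \<and>
     (\<forall>e>0. (\<lambda>n. measure M {\<omega>\<in>space M. e < \<bar>Y n \<omega> - c\<bar>}) \<longlonglongrightarrow> 0)"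

end

theory Submission
  imports Defs
begin

text \<open>
  The number of V_i with \<Phi>(V_i) \<le> a, resp. \<Phi>(V_i) < b, is n a + o(n),
  resp. n b + o(n), in probability by the law of large numbers, so the observations at the ranks
  [na]+1, ..., [nb] coincide with the observations with V_i \<in> A_V except for o(n) of them near the
  two cut points. For a summand h(V_i, W_i), the misplaced observations contribute at most
  c \<cdot> (rank error) + (2/c) \<Sigma> h(V_i, W_i)^2 for every c > 0, which is o(n) in probability. Hence the
  trimmed mean of V^p W^q has the limit E[V^p 1(V \<in> A_V)] E[W^q] / (b - a) = \<lambda>_{A,p} E[W^q] of the
  corresponding restricted full-sample mean, and the trimmed means and the trimmed covariance of
  the affine combinations X_{i,j} are polynomials in these moments.
\<close>

section \<open>The standard normal distribution function\<close>

abbreviation std_normal :: "real measure" where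
  "std_normal \<equiv> density lborel std_normal_density"

interpretation std_normal: real_distribution std_normal
proof -
  interpret prob_space std_normal by (auto intro: prob_space_normal_density)
  show "real_distribution std_normal" by unfold_locales simp
qed

lemma std_normal_density_neq_0 [simp]: "std_normal_density x \<noteq> 0"
  using normal_density_pos[of 1 0 x] by simp

lemma set_integrable_std_normal_density:
  "S \<in> sets borel \<Longrightarrow> set_integrable lborel S std_normal_density"
  unfolding set_integrable_def
  using integrable_real_mult_indicator[of S lborel std_normal_density] by (simp add: mult.commute)

lemma measure_std_normal:
  assumes "S \<in> sets borel"
  shows "measure std_normal S = (LBINT x:S. std_normal_density x)"
proof -
  have "emeasure std_normal S = (\<integral>\<^sup>+x. ennreal (indicator S x * std_normal_density x) \<partial>lborel)"
    using assms by (subst emeasure_density) (auto intro!: nn_integral_cong simp: indicator_def)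
  also have "\<dots> = ennreal (LBINT x:S. std_normal_density x)"
    using set_integrable_std_normal_density[OF assms]
    unfolding set_lebesgue_integral_def set_integrable_def
    by (subst nn_integral_eq_integral) auto
  moreover have "0 \<le> (LBINT x:S. std_normal_density x)"
    unfolding set_lebesgue_integral_def by (intro Bochner_Integration.integral_nonneg) simp
  ultimately show ?thesis
    unfolding measure_def by simp
qed

lemma Phi_eq_cdf: "Phi = cdf std_normal"
  unfolding Phi_def cdf_def2 by (simp add: measure_std_normal fun_eq_iff)

lemma measure_std_normal_singleton: "measure std_normal {x} = 0"
proof -
  have "AE t in lborel. indicator {x} t * std_normal_density t = 0"
    using AE_lborel_singleton[of x] by eventually_elim auto
  then show ?thesis
    by (simp add: measure_std_normal set_lebesgue_integral_def integral_eq_zero_AE)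
qed

lemma isCont_Phi: "isCont Phi x"
  unfolding Phi_eq_cdf by (simp add: std_normal.isCont_cdf measure_std_normal_singleton)

lemma measure_std_normal_Ioc_pos:
  assumes "x < y"
  shows "0 < measure std_normal {x<..y}"
proof -
  let ?f = "\<lambda>t. indicator {x<..y} t * std_normal_density t"
  have "integral\<^sup>L lborel ?f \<noteq> 0"
  proof
    assume "integral\<^sup>L lborel ?f = 0"
    then have "AE t in lborel. ?f t = 0"
      using set_integrable_std_normal_density[of "{x<..y}"]
      by (subst (asm) integral_nonneg_eq_0_iff_AE) (auto simp: set_integrable_def)
    then have "AE t in lborel. t \<notin> {x<..y}"
      by (rule eventually_mono) (auto split: split_indicator_asm)
    then have "emeasure lborel {x<..y} = 0"
      by (subst (asm) AE_iff_null_sets[symmetric]) auto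
    with assms show False by simp
  qed
  moreover have "0 \<le> integral\<^sup>L lborel ?f"
    by (intro Bochner_Integration.integral_nonneg) simp
  ultimately show ?thesis
    by (simp add: measure_std_normal set_lebesgue_integral_def less_le)
qed

lemma strict_mono_Phi: "strict_mono Phi"
proof
  fix x y :: real assume "x < y"
  then show "Phi x < Phi y"
    using std_normal.cdf_diff_eq[of x y] measure_std_normal_Ioc_pos[of x y]
    unfolding Phi_eq_cdf by simp
qed

lemma Phi_bounds: "0 < Phi x" "Phi x < 1"
proof -
  have "0 \<le> Phi (x - 1)" "Phi (x + 1) \<le> 1"
    unfolding Phi_eq_cdf by (rule std_normal.cdf_nonneg, rule std_normal.cdf_bounded_prob)
  moreover have "Phi (x - 1) < Phi x" "Phi x < Phi (x + 1)"
    by (simp_all add: strict_mono_less[OF strict_mono_Phi])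
  ultimately show "0 < Phi x" "Phi x < 1" by linarith+
qed

lemma Phi_surj:
  assumes "0 < p" "p < 1"
  obtains q where "Phi q = p"
proof -
  have "eventually (\<lambda>x. Phi x < p) at_bot" "eventually (\<lambda>x. p < Phi x) at_top"
    using assms std_normal.cdf_lim_at_bot std_normal.cdf_lim_at_top_prob
    unfolding Phi_eq_cdf by (auto dest: order_tendstoD)
  then obtain x0 x1 where "\<forall>x\<le>x0. Phi x < p" "\<forall>x\<ge>x1. p < Phi x"
    by (auto simp: eventually_at_bot_linorder eventually_at_top_linorder)
  then have "Phi (min x0 x1) < p" "p < Phi (max x0 x1)" by simp_all
  then obtain q where "Phi q = p"
    using IVT[of Phi "min x0 x1" p "max x0 x1"] isCont_Phi by force
  then show thesis by (rule that)
qed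

lemma measure_Phi_less:
  assumes "0 < p" "p \<le> 1"
  shows "measure std_normal {x. Phi x < p} = p"
proof (cases "p = 1")
  case True
  then show ?thesis using Phi_bounds std_normal.prob_space by simp
next
  case False
  with assms obtain q where q: "Phi q = p" using Phi_surj[of p] by force
  then have "{x. Phi x < p} = {..q} - {q}"
    using strict_mono_less[OF strict_mono_Phi] by auto
  then show ?thesis
    using q measure_std_normal_singleton
    by (simp add: std_normal.finite_measure_Diff Phi_eq_cdf cdf_def2)
qed

lemma measure_Phi_le:
  assumes "0 \<le> p" "p < 1"
  shows "measure std_normal {x. Phi x \<le> p} = p"
proof (cases "p = 0")
  case True
  then show ?thesis using Phi_bounds by (simp add: not_le[symmetric])
next
  case False
  with assms obtain q where q: "Phi q = p" using Phi_surj[of p] by force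
  then have "{x. Phi x \<le> p} = {..q}"
    using strict_mono_less_eq[OF strict_mono_Phi] by auto
  then show ?thesis using q by (simp add: Phi_eq_cdf cdf_def2)
qed

lemma Phi_measurable [measurable]: "Phi \<in> borel_measurable borel"
  by (intro borel_measurable_continuous_onI continuous_at_imp_continuous_on ballI isCont_Phi)

lemma A_V_measurable [measurable]: "A_V a b \<in> sets borel"
  unfolding A_V_def by measurable

lemma integral_std_normal_density_A_V:
  assumes "0 \<le> a" "a < b" "b \<le> 1"
  shows "(LBINT x:A_V a b. std_normal_density x) = b - a"
proof -
  have "A_V a b = {x. Phi x < b} - {x. Phi x \<le> a}"
    unfolding A_V_def by auto
  moreover have "{x. Phi x \<le> a} \<subseteq> {x. Phi x < b}" "{x. Phi x < b} \<in> sets borel"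
    "{x. Phi x \<le> a} \<in> sets borel"
    using assms by auto
  ultimately show ?thesis
    using assms by (simp add: measure_std_normal[symmetric] std_normal.finite_measure_Diff
        measure_Phi_less measure_Phi_le)
qed

section \<open>Sums along a sorted list\<close>

lemma sort_key_cong: "(\<And>x. x \<in> set xs \<Longrightarrow> f x = g x) \<Longrightarrow> sort_key f xs = sort_key g xs"
proof (induction xs)
  case (Cons x xs)
  have "insort_key f x ys = insort_key g x ys" if "set ys \<subseteq> set (x # xs)" for ys
    using that Cons.prems by (induction ys) auto
  moreover have "set (sort_key g xs) \<subseteq> set (x # xs)" by auto
  ultimately show ?case using Cons by simp
qed simp

lemma set_take_card_sorted:
  assumes d: "distinct \<pi>" and s: "sorted (map f \<pi>)" and S: "S \<subseteq> set \<pi>"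
    and below: "\<forall>s\<in>S. \<forall>t\<in>set \<pi> - S. f s < f t"
  shows "set (take (card S) \<pi>) = S"
proof -
  let ?k = "card S"
  have fin: "finite S" using S finite_subset by blast
  have kl: "?k \<le> length \<pi>" using card_mono[OF _ S] distinct_card[OF d] by simp
  have ct: "card (set (take ?k \<pi>)) = ?k"
    using distinct_card[of "take ?k \<pi>"] d kl by (simp add: distinct_take)
  have "S \<subseteq> set (take ?k \<pi>)"
  proof
    fix x assume x: "x \<in> S"
    show "x \<in> set (take ?k \<pi>)"
    proof (rule ccontr)
      assume nx: "x \<notin> set (take ?k \<pi>)"
      obtain j where j: "j < length \<pi>" "\<pi> ! j = x" using x S by (metis in_set_conv_nth subsetD)
      with nx have "?k \<le> j" by (metis in_set_conv_nth length_take min.absorb2 nth_take kl not_le)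
      have "\<not> set (take ?k \<pi>) \<subseteq> S"
        using card_subset_eq[OF fin _ ct] x nx by blast
      then obtain y where y: "y \<in> set (take ?k \<pi>)" "y \<notin> S" by auto
      then obtain i where i: "i < ?k" "\<pi> ! i = y" using kl by (auto simp: in_set_conv_nth)
      have "f y \<le> f x"
        using sorted_nth_mono[OF s, of i j] i j \<open>?k \<le> j\<close> by simp
      moreover have "f x < f y" using below x y in_set_takeD by fastforce
      ultimately show False by simp
    qed
  qed
  then show ?thesis using card_subset_eq[OF _ _ ct[symmetric]] by simp
qed

lemma sum_nth_eq_sum_set_take:
  assumes "distinct \<pi>" "k \<le> length \<pi>"
  shows "(\<Sum>j<k. g (\<pi> ! j)) = sum g (set (take k \<pi>))"
proof -
  have "(\<Sum>j<k. g (\<pi> ! j)) = sum_list (map g (take k \<pi>))"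
    using assms(2) by (simp add: sum_list_sum_nth atLeast0LessThan min_def)
  also have "\<dots> = sum g (set (take k \<pi>))"
    using assms by (intro sum_list_distinct_conv_sum_set) (simp add: distinct_take)
  finally show ?thesis .
qed

lemma sum_take_card_sorted:
  assumes "distinct \<pi>" "sorted (map f \<pi>)" "S \<subseteq> set \<pi>"
    and "\<forall>s\<in>S. \<forall>t\<in>set \<pi> - S. f s < f t"
  shows "(\<Sum>j<card S. g (\<pi> ! j)) = sum g S"
proof -
  have "card S \<le> length \<pi>"
    using card_mono[OF _ assms(3)] distinct_card[OF assms(1)] by simp
  then show ?thesis
    using sum_nth_eq_sum_set_take[OF assms(1), of "card S" g] set_take_card_sorted[OF assms] by simp
qed

lemma abs_le_add_square_divide:
  fixes x c :: real
  assumes "c > 0"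
  shows "\<bar>x\<bar> \<le> c + x\<^sup>2 / c"
proof -
  have "0 \<le> (c - \<bar>x\<bar>)\<^sup>2 + c * \<bar>x\<bar>" using assms by simp
  then have "c * \<bar>x\<bar> \<le> c\<^sup>2 + x\<^sup>2"
    by (simp add: power2_eq_square algebra_simps)
  with assms show ?thesis by (simp add: field_simps power2_eq_square)
qed

lemma sum_abs_le_card_add_sum_squares:
  fixes h :: "nat \<Rightarrow> real" and c :: real
  assumes "c > 0" "I \<subseteq> {..<n}"
  shows "(\<Sum>j\<in>I. \<bar>h j\<bar>) \<le> c * real (card I) + (\<Sum>j<n. (h j)\<^sup>2) / c"
proof -
  have "(\<Sum>j\<in>I. \<bar>h j\<bar>) \<le> (\<Sum>j\<in>I. c + (h j)\<^sup>2 / c)"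
    by (intro sum_mono abs_le_add_square_divide assms)
  also have "\<dots> = c * card I + (\<Sum>j\<in>I. (h j)\<^sup>2) / c"
    by (simp add: sum.distrib sum_divide_distrib)
  also have "\<dots> \<le> c * card I + (\<Sum>j<n. (h j)\<^sup>2) / c"
    using assms by (intro add_left_mono divide_right_mono sum_mono2) auto
  finally show ?thesis .
qed

lemma sum_lessThan_diff_le:
  fixes h :: "nat \<Rightarrow> real"
  assumes "c > 0" "u \<le> n" "v \<le> n"
  shows "\<bar>(\<Sum>j<u. h j) - (\<Sum>j<v. h j)\<bar> \<le> c * \<bar>real u - real v\<bar> + (\<Sum>j<n. (h j)\<^sup>2) / c"
proof -
  have "\<bar>(\<Sum>j<u. h j) - (\<Sum>j<v. h j)\<bar> = \<bar>\<Sum>j\<in>{min u v..<max u v}. h j\<bar>"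
    using sum_diff_nat_ivl[of 0 u v h] sum_diff_nat_ivl[of 0 v u h]
    by (cases "u \<le> v") (simp_all add: atLeast0LessThan abs_minus_commute)
  also have "\<dots> \<le> (\<Sum>j\<in>{min u v..<max u v}. \<bar>h j\<bar>)"
    by (rule sum_abs)
  also have "\<dots> \<le> c * real (card {min u v..<max u v}) + (\<Sum>j<n. (h j)\<^sup>2) / c"
    using assms by (intro sum_abs_le_card_add_sum_squares) auto
  also have "real (card {min u v..<max u v}) = \<bar>real u - real v\<bar>"
    by (simp add: max_def min_def of_nat_diff)
  finally show ?thesis .
qed

lemma sum_atLeastLessThan_diff_le:
  fixes h :: "nat \<Rightarrow> real"
  assumes "c > 0" "p \<le> r" "r \<le> n" "p' \<le> r'" "r' \<le> n"
  shows "\<bar>(\<Sum>j\<in>{p..<r}. h j) - (\<Sum>j\<in>{p'..<r'}. h j)\<bar>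
    \<le> c * (\<bar>real p - real p'\<bar> + \<bar>real r - real r'\<bar>) + 2 * (\<Sum>j<n. (h j)\<^sup>2) / c"
proof -
  have "\<bar>(\<Sum>j\<in>{p..<r}. h j) - (\<Sum>j\<in>{p'..<r'}. h j)\<bar>
      = \<bar>((\<Sum>j<r. h j) - (\<Sum>j<r'. h j)) - ((\<Sum>j<p. h j) - (\<Sum>j<p'. h j))\<bar>"
    using sum_diff_nat_ivl[of 0 p r h] sum_diff_nat_ivl[of 0 p' r' h] assms
    by (simp add: atLeast0LessThan)
  also have "\<dots> \<le> \<bar>(\<Sum>j<r. h j) - (\<Sum>j<r'. h j)\<bar> + \<bar>(\<Sum>j<p. h j) - (\<Sum>j<p'. h j)\<bar>"
    by (rule abs_triangle_ineq4)
  finally show ?thesis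
    using sum_lessThan_diff_le[of c r n r' h] sum_lessThan_diff_le[of c p n p' h] assms
    by (simp add: algebra_simps)
qed

lemma sum_sort_key_prefix:
  fixes v :: "nat \<Rightarrow> real"
  assumes down: "\<And>x y. x \<le> y \<Longrightarrow> Q y \<Longrightarrow> Q x"
  shows "(\<Sum>j<card {k\<in>{1..n}. Q (v k)}. h (sort_key v [1..<n+1] ! j))
    = (\<Sum>k\<in>{k\<in>{1..n}. Q (v k)}. h k)"
proof (rule sum_take_card_sorted)
  show "\<forall>s\<in>{k\<in>{1..n}. Q (v k)}. \<forall>t\<in>set (sort_key v [1..<n+1]) - {k\<in>{1..n}. Q (v k)}. v s < v t"
    using down by (auto simp: not_less[symmetric])
qed auto

lemma sum_sort_key_A_V_approx:
  fixes v h :: "nat \<Rightarrow> real" and c :: real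
  assumes "p \<le> r" "r \<le> n" "a < b" "c > 0"
  defines "\<pi> \<equiv> sort_key v [1..<n+1]"
    and "la \<equiv> card {k\<in>{1..n}. Phi (v k) \<le> a}" and "lb \<equiv> card {k\<in>{1..n}. Phi (v k) < b}"
  shows "\<bar>(\<Sum>j\<in>{p..<r}. h (\<pi> ! j)) - (\<Sum>k\<in>{1..n}. h k * indicator (A_V a b) (v k))\<bar>
    \<le> c * (\<bar>real p - real la\<bar> + \<bar>real r - real lb\<bar>) + 2 * (\<Sum>k\<in>{1..n}. (h k)\<^sup>2) / c"
proof -
  let ?Sa = "{k\<in>{1..n}. Phi (v k) \<le> a}" and ?Sb = "{k\<in>{1..n}. Phi (v k) < b}"
  have Phi_mono: "Phi x \<le> Phi y" if "x \<le> y" for x y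
    using that strict_mono_less_eq[OF strict_mono_Phi] by simp
  have sub: "?Sa \<subseteq> ?Sb" using assms(3) by auto
  then have "la \<le> lb"
    unfolding la_def lb_def by (intro card_mono) auto
  have "lb \<le> card {1..n}"
    unfolding lb_def by (intro card_mono) auto
  then have "lb \<le> n" by simp
  \<comment> \<open>Phi is monotone, so the indices with Phi (v k) \<le> a, resp. < b, occupy the first la, resp. lb,
    positions of \<pi>; hence the indices with v k \<in> A_V a b occupy the positions la..<lb.\<close>
  have "(\<Sum>j\<in>{la..<lb}. h (\<pi> ! j)) = (\<Sum>j<lb. h (\<pi> ! j)) - (\<Sum>j<la. h (\<pi> ! j))"
    using sum_diff_nat_ivl[of 0 la lb "\<lambda>j. h (\<pi> ! j)"] \<open>la \<le> lb\<close> by (simp add: atLeast0LessThan)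
  also have "\<dots> = sum h ?Sb - sum h ?Sa"
  proof -
    have "(\<Sum>j<lb. h (\<pi> ! j)) = sum h ?Sb"
      unfolding \<pi>_def lb_def
      by (rule sum_sort_key_prefix[where Q = "\<lambda>x. Phi x < b"]) (use Phi_mono in fastforce)
    moreover have "(\<Sum>j<la. h (\<pi> ! j)) = sum h ?Sa"
      unfolding \<pi>_def la_def
      by (rule sum_sort_key_prefix[where Q = "\<lambda>x. Phi x \<le> a"]) (use Phi_mono in fastforce)
    ultimately show ?thesis by simp
  qed
  also have "\<dots> = sum h (?Sb - ?Sa)"
    using sub by (simp add: sum_diff)
  also have "\<dots> = (\<Sum>k\<in>{1..n}. h k * indicator (A_V a b) (v k))"
    by (rule sum.mono_neutral_cong_left) (auto simp: A_V_def split: split_indicator_asm)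
  finally have la_lb: "(\<Sum>j\<in>{la..<lb}. h (\<pi> ! j)) = (\<Sum>k\<in>{1..n}. h k * indicator (A_V a b) (v k))" .
  have "(\<Sum>j<n. (h (\<pi> ! j))\<^sup>2) = (\<Sum>k\<in>{1..n}. (h k)\<^sup>2)"
    using sum_nth_eq_sum_set_take[of \<pi> n "\<lambda>k. (h k)\<^sup>2"] unfolding \<pi>_def
    by (simp add: atLeastLessThanSuc_atLeastAtMost del: upt_Suc)
  then show ?thesis
    using sum_atLeastLessThan_diff_le[of c p r n la lb "\<lambda>j. h (\<pi> ! j)"] assms \<open>la \<le> lb\<close> \<open>lb \<le> n\<close>
    unfolding la_lb by simp
qed

lemma measurable_insort_key:
  fixes f :: "'a \<Rightarrow> 'b \<Rightarrow> 'c::linorder"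
  assumes "\<And>x y. {\<omega>\<in>space M. f \<omega> x \<le> f \<omega> y} \<in> sets M"
  shows "(\<lambda>\<omega>. insort_key (f \<omega>) x ys) \<in> measurable M (count_space UNIV)"
proof (induction ys)
  case (Cons y ys)
  have "(\<lambda>\<omega>. y # insort_key (f \<omega>) x ys) \<in> measurable M (count_space UNIV)"
    using measurable_compose[OF Cons.IH, of "(#) y"] by simp
  then have "(\<lambda>\<omega>. if f \<omega> x \<le> f \<omega> y then x # y # ys else y # insort_key (f \<omega>) x ys)
      \<in> measurable M (count_space UNIV)"
    by (intro measurable_If assms) simp
  then show ?case by simp
qed simp

lemma measurable_sort_key:
  fixes f :: "'a \<Rightarrow> 'b::countable \<Rightarrow> 'c::linorder"
  assumes "\<And>x y. {\<omega>\<in>space M. f \<omega> x \<le> f \<omega> y} \<in> sets M"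
  shows "(\<lambda>\<omega>. sort_key (f \<omega>) xs) \<in> measurable M (count_space UNIV)"
proof (induction xs)
  case (Cons x xs)
  have "(\<lambda>\<omega>. (\<lambda>L \<omega>. insort_key (f \<omega>) x L) (sort_key (f \<omega>) xs) \<omega>) \<in> measurable M (count_space UNIV)"
    by (rule measurable_compose_countable[where f = "\<lambda>L \<omega>. insort_key (f \<omega>) x L",
          OF measurable_insort_key[where f = f, OF assms] Cons.IH])
  then show ?case by simp
qed simp

section \<open>Convergence in probability\<close>

context prob_space
begin

lemma conv_in_prob_const:
  assumes "x \<longlonglongrightarrow> c"
  shows "conv_in_prob M (\<lambda>n \<omega>. x n) c"
  unfolding conv_in_prob_def
proof (intro conjI allI impI)
  fix e :: real assume "e > 0"
  with assms have "eventually (\<lambda>n. \<bar>x n - c\<bar> < e) sequentially"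
    by (auto dest: tendstoD simp: dist_real_def)
  then have "eventually (\<lambda>n. prob {\<omega>\<in>space M. e < \<bar>x n - c\<bar>} = 0) sequentially"
    by eventually_elim auto
  then show "(\<lambda>n. prob {\<omega>\<in>space M. e < \<bar>x n - c\<bar>}) \<longlonglongrightarrow> 0"
    by (rule tendsto_eventually)
qed simp

lemma conv_in_prob_D:
  "conv_in_prob M X c \<Longrightarrow> e > 0 \<Longrightarrow> (\<lambda>n. prob {\<omega>\<in>space M. e < \<bar>X n \<omega> - c\<bar>}) \<longlonglongrightarrow> 0"
  unfolding conv_in_prob_def by blast

lemma conv_in_prob_measurable:
  "conv_in_prob M X c \<Longrightarrow> X n \<in> borel_measurable M"
  unfolding conv_in_prob_def by simp

lemma conv_in_prob_continuous2:
  assumes X: "conv_in_prob M X c" and Y: "conv_in_prob M Y d"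
    and cont: "isCont (\<lambda>z. f (fst z) (snd z)) (c, d)"
    and meas: "\<And>n. (\<lambda>\<omega>. f (X n \<omega>) (Y n \<omega>)) \<in> borel_measurable M"
  shows "conv_in_prob M (\<lambda>n \<omega>. f (X n \<omega>) (Y n \<omega>)) (f c d)"
  unfolding conv_in_prob_def
proof (intro conjI allI impI meas)
  fix e :: real assume "e > 0"
  have [measurable]: "X n \<in> borel_measurable M" "Y n \<in> borel_measurable M" for n
    using X Y by (auto intro: conv_in_prob_measurable)
  note meas [measurable]
  obtain \<delta> where "\<delta> > 0" and \<delta>: "\<And>x y. dist (x, y) (c, d) < \<delta> \<Longrightarrow> \<bar>f x y - f c d\<bar> < e"
    using cont \<open>e > 0\<close> unfolding continuous_at_eps_delta by (force simp: dist_real_def)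
  have close: "\<bar>f x y - f c d\<bar> < e" if "\<bar>x - c\<bar> \<le> \<delta> / 3" "\<bar>y - d\<bar> \<le> \<delta> / 3" for x y
  proof (rule \<delta>)
    have "dist (x, y) (c, d) \<le> \<bar>x - c\<bar> + \<bar>y - d\<bar>"
      using sqrt_sum_squares_le_sum_abs by (simp add: dist_Pair_Pair dist_real_def)
    with that \<open>\<delta> > 0\<close> show "dist (x, y) (c, d) < \<delta>" by linarith
  qed
  let ?Ex = "\<lambda>n. {\<omega>\<in>space M. \<delta> / 3 < \<bar>X n \<omega> - c\<bar>}" and ?Ey = "\<lambda>n. {\<omega>\<in>space M. \<delta> / 3 < \<bar>Y n \<omega> - d\<bar>}"
  have "{\<omega>\<in>space M. e < \<bar>f (X n \<omega>) (Y n \<omega>) - f c d\<bar>} \<subseteq> ?Ex n \<union> ?Ey n" for n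
  proof
    fix \<omega> assume \<omega>: "\<omega> \<in> {\<omega>\<in>space M. e < \<bar>f (X n \<omega>) (Y n \<omega>) - f c d\<bar>}"
    show "\<omega> \<in> ?Ex n \<union> ?Ey n"
    proof (rule ccontr)
      assume "\<omega> \<notin> ?Ex n \<union> ?Ey n"
      with \<omega> have "\<bar>X n \<omega> - c\<bar> \<le> \<delta> / 3" "\<bar>Y n \<omega> - d\<bar> \<le> \<delta> / 3" by auto
      from close[OF this] \<omega> show False by simp
    qed
  qed
  then have "prob {\<omega>\<in>space M. e < \<bar>f (X n \<omega>) (Y n \<omega>) - f c d\<bar>} \<le> prob (?Ex n \<union> ?Ey n)" for n
    by (intro finite_measure_mono) auto
  also have "prob (?Ex n \<union> ?Ey n) \<le> prob (?Ex n) + prob (?Ey n)" for n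
    by (intro measure_subadditive) auto
  finally have le: "prob {\<omega>\<in>space M. e < \<bar>f (X n \<omega>) (Y n \<omega>) - f c d\<bar>} \<le> prob (?Ex n) + prob (?Ey n)" for n .
  have "\<delta> / 3 > 0" using \<open>\<delta> > 0\<close> by simp
  then have "(\<lambda>n. prob (?Ex n) + prob (?Ey n)) \<longlonglongrightarrow> 0 + 0"
    by (intro tendsto_add conv_in_prob_D[OF X] conv_in_prob_D[OF Y])
  then have lim: "(\<lambda>n. prob (?Ex n) + prob (?Ey n)) \<longlonglongrightarrow> 0"
    by (simp only: add_0)
  show "(\<lambda>n. prob {\<omega>\<in>space M. e < \<bar>f (X n \<omega>) (Y n \<omega>) - f c d\<bar>}) \<longlonglongrightarrow> 0"
    by (rule tendsto_sandwich[OF always_eventually always_eventually tendsto_const lim])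
      (use le in auto)
qed

lemma conv_in_prob_add:
  assumes "conv_in_prob M X c" "conv_in_prob M Y d"
  shows "conv_in_prob M (\<lambda>n \<omega>. X n \<omega> + Y n \<omega>) (c + d)"
  using assms conv_in_prob_measurable[OF assms(1)] conv_in_prob_measurable[OF assms(2)]
  by (intro conv_in_prob_continuous2[where f = "(+)"]) (auto intro!: continuous_intros borel_measurable_add)

lemma conv_in_prob_diff:
  assumes "conv_in_prob M X c" "conv_in_prob M Y d"
  shows "conv_in_prob M (\<lambda>n \<omega>. X n \<omega> - Y n \<omega>) (c - d)"
  using assms conv_in_prob_measurable[OF assms(1)] conv_in_prob_measurable[OF assms(2)]
  by (intro conv_in_prob_continuous2[where f = "(-)"]) (auto intro!: continuous_intros borel_measurable_diff)

lemma conv_in_prob_mult: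
  assumes "conv_in_prob M X c" "conv_in_prob M Y d"
  shows "conv_in_prob M (\<lambda>n \<omega>. X n \<omega> * Y n \<omega>) (c * d)"
  using assms conv_in_prob_measurable[OF assms(1)] conv_in_prob_measurable[OF assms(2)]
  by (intro conv_in_prob_continuous2[where f = "(*)"]) (auto intro!: continuous_intros borel_measurable_times)

lemma conv_in_prob_scale:
  "conv_in_prob M X c \<Longrightarrow> conv_in_prob M (\<lambda>n \<omega>. k * X n \<omega>) (k * c)"
  using conv_in_prob_mult[OF conv_in_prob_const[of "\<lambda>_. k"]] by simp

lemma prob_ge_le_expectation_bound:
  assumes "integrable M Q" "\<And>\<omega>. \<omega> \<in> space M \<Longrightarrow> 0 \<le> Q \<omega>" "expectation Q \<le> s" "t > 0"
  shows "prob {\<omega>\<in>space M. t \<le> Q \<omega>} \<le> s / t"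
proof -
  have "prob {\<omega>\<in>space M. t \<le> Q \<omega>} \<le> expectation Q / t"
    using assms by (intro integral_Markov_inequality_measure[where A = "space M"]) auto
  also have "\<dots> \<le> s / t"
    using assms by (intro divide_right_mono) auto
  finally show ?thesis .
qed

lemma conv_in_prob_dominated:
  assumes X: "\<And>n. X n \<in> borel_measurable M"
    and D: "conv_in_prob M D 0"
    and Q: "\<And>n. integrable M (Q n)" "\<And>n \<omega>. \<omega> \<in> space M \<Longrightarrow> 0 \<le> Q n \<omega>"
      "\<And>n. expectation (Q n) \<le> s"
    and dom: "\<And>c n \<omega>. c > 0 \<Longrightarrow> \<omega> \<in> space M \<Longrightarrow> \<bar>X n \<omega> - x\<bar> \<le> c * D n \<omega> + Q n \<omega> / c"
  shows "conv_in_prob M X x"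
  unfolding conv_in_prob_def
proof (intro conjI allI impI X)
  fix e :: real assume "e > 0"
  note [measurable] = X conv_in_prob_measurable[OF D] borel_measurable_integrable[OF Q(1)]
  have "0 \<le> s"
    using Q(3)[of 0] Bochner_Integration.integral_nonneg[of M "Q 0"] Q(2) by fastforce
  show "(\<lambda>n. prob {\<omega>\<in>space M. e < \<bar>X n \<omega> - x\<bar>}) \<longlonglongrightarrow> 0"
  proof (rule LIMSEQ_I)
    fix r :: real assume "r > 0"
    \<comment> \<open>By Markov, Q n \<ge> t has probability < r/2; off that event Q n / c < e/2.\<close>
    define t where "t = 2 * (s + 1) / r"
    define c where "c = 2 * t / e"
    have "t > 0" "c > 0" unfolding c_def t_def using \<open>e > 0\<close> \<open>r > 0\<close> \<open>0 \<le> s\<close> by auto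
    have Markov: "prob {\<omega>\<in>space M. t \<le> Q n \<omega>} < r / 2" for n
    proof -
      have "prob {\<omega>\<in>space M. t \<le> Q n \<omega>} \<le> s / t"
        using Q \<open>t > 0\<close> by (rule prob_ge_le_expectation_bound)
      also have "\<dots> < (s + 1) / t"
        using \<open>t > 0\<close> by (simp add: divide_strict_right_mono)
      also have "\<dots> = r / 2"
        unfolding t_def using \<open>r > 0\<close> \<open>0 \<le> s\<close> by (simp add: field_simps)
      finally show ?thesis .
    qed
    have "e / (2 * c) > 0" using \<open>c > 0\<close> \<open>e > 0\<close> by simp
    from LIMSEQ_D[OF conv_in_prob_D[OF D this], of "r / 2"] \<open>r > 0\<close>
    obtain N where N: "\<And>n. n \<ge> N \<Longrightarrow> prob {\<omega>\<in>space M. e / (2 * c) < \<bar>D n \<omega> - 0\<bar>} < r / 2"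
      by auto
    have "prob {\<omega>\<in>space M. e < \<bar>X n \<omega> - x\<bar>} < r" if "n \<ge> N" for n
    proof -
      have "{\<omega>\<in>space M. e < \<bar>X n \<omega> - x\<bar>}
          \<subseteq> {\<omega>\<in>space M. e / (2 * c) < \<bar>D n \<omega> - 0\<bar>} \<union> {\<omega>\<in>space M. t \<le> Q n \<omega>}"
      proof safe
        fix \<omega> assume \<omega>: "\<omega> \<in> space M" "e < \<bar>X n \<omega> - x\<bar>" "\<not> t \<le> Q n \<omega>"
        have "e < c * D n \<omega> + Q n \<omega> / c"
          using dom[OF \<open>c > 0\<close> \<omega>(1), of n] \<omega>(2) by linarith
        moreover have "Q n \<omega> / c < e / 2"
          using \<omega>(3) \<open>e > 0\<close> \<open>t > 0\<close> by (simp add: c_def field_simps)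
        ultimately have "e / 2 < c * D n \<omega>" by linarith
        then have "e / (2 * c) < D n \<omega>"
          using \<open>c > 0\<close> by (simp add: field_simps)
        then show "e / (2 * c) < \<bar>D n \<omega> - 0\<bar>" by simp
      qed
      then have "prob {\<omega>\<in>space M. e < \<bar>X n \<omega> - x\<bar>}
          \<le> prob {\<omega>\<in>space M. e / (2 * c) < \<bar>D n \<omega> - 0\<bar>} + prob {\<omega>\<in>space M. t \<le> Q n \<omega>}"
        by (intro order.trans[OF finite_measure_mono measure_subadditive]) auto
      then show ?thesis using N[OF that] Markov[of n] by simp
    qed
    then show "\<exists>N. \<forall>n\<ge>N. norm (prob {\<omega>\<in>space M. e < \<bar>X n \<omega> - x\<bar>} - 0) < r"
      by auto
  qed
qed

lemma expectation_square_sum_centered: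
  fixes Y :: "nat \<Rightarrow> 'a \<Rightarrow> real"
  assumes int1: "\<And>i. i \<ge> 1 \<Longrightarrow> integrable M (Y i)"
    and int2: "\<And>i j. i \<ge> 1 \<Longrightarrow> j \<ge> 1 \<Longrightarrow> integrable M (\<lambda>\<omega>. Y i \<omega> * Y j \<omega>)"
    and E1: "\<And>i. i \<ge> 1 \<Longrightarrow> expectation (Y i) = \<mu>"
    and E2: "\<And>i. i \<ge> 1 \<Longrightarrow> expectation (\<lambda>\<omega>. Y i \<omega> * Y i \<omega>) = s"
    and E12: "\<And>i j. i \<ge> 1 \<Longrightarrow> j \<ge> 1 \<Longrightarrow> i \<noteq> j \<Longrightarrow> expectation (\<lambda>\<omega>. Y i \<omega> * Y j \<omega>) = \<mu>\<^sup>2"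
  shows "integrable M (\<lambda>\<omega>. (\<Sum>i\<in>{1..n}. Y i \<omega> - \<mu>)\<^sup>2)"
    and "expectation (\<lambda>\<omega>. (\<Sum>i\<in>{1..n}. Y i \<omega> - \<mu>)\<^sup>2) = real n * (s - \<mu>\<^sup>2)"
proof -
  define t where "t i j \<omega> = Y i \<omega> * Y j \<omega> - \<mu> * Y j \<omega> - \<mu> * Y i \<omega> + \<mu> * \<mu>" for i j \<omega>
  have expand: "(\<lambda>\<omega>. (\<Sum>i\<in>{1..n}. Y i \<omega> - \<mu>)\<^sup>2) = (\<lambda>\<omega>. \<Sum>i\<in>{1..n}. \<Sum>j\<in>{1..n}. t i j \<omega>)"
    unfolding power2_eq_square sum_product t_def by (intro ext sum.cong refl) (simp add: algebra_simps)
  have int: "integrable M (t i j)" if "i \<in> {1..n}" "j \<in> {1..n}" for i j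
    using that int1 int2 unfolding t_def by simp
  have E: "expectation (t i j) = (if i = j then s - \<mu>\<^sup>2 else 0)" if "i \<in> {1..n}" "j \<in> {1..n}" for i j
    using that int1 int2 E1 E2 E12 prob_space unfolding t_def by (simp add: power2_eq_square)
  show "integrable M (\<lambda>\<omega>. (\<Sum>i\<in>{1..n}. Y i \<omega> - \<mu>)\<^sup>2)"
    unfolding expand using int by (intro Bochner_Integration.integrable_sum) auto
  have "expectation (\<lambda>\<omega>. (\<Sum>i\<in>{1..n}. Y i \<omega> - \<mu>)\<^sup>2)
      = (\<Sum>i\<in>{1..n}. expectation (\<lambda>\<omega>. \<Sum>j\<in>{1..n}. t i j \<omega>))"
    unfolding expand using int by (intro Bochner_Integration.integral_sum Bochner_Integration.integrable_sum) auto
  also have "\<dots> = (\<Sum>i\<in>{1..n}. \<Sum>j\<in>{1..n}. expectation (t i j))"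
    using int by (intro sum.cong refl Bochner_Integration.integral_sum) auto
  also have "\<dots> = (\<Sum>i\<in>{1..n}. \<Sum>j\<in>{1..n}. if i = j then s - \<mu>\<^sup>2 else 0)"
    using E by (intro sum.cong refl) auto
  finally show "expectation (\<lambda>\<omega>. (\<Sum>i\<in>{1..n}. Y i \<omega> - \<mu>)\<^sup>2) = real n * (s - \<mu>\<^sup>2)"
    by simp
qed

theorem conv_in_prob_average_uncorrelated:
  fixes Y :: "nat \<Rightarrow> 'a \<Rightarrow> real"
  assumes meas: "\<And>i. i \<ge> 1 \<Longrightarrow> Y i \<in> borel_measurable M"
    and int1: "\<And>i. i \<ge> 1 \<Longrightarrow> integrable M (Y i)"
    and int2: "\<And>i j. i \<ge> 1 \<Longrightarrow> j \<ge> 1 \<Longrightarrow> integrable M (\<lambda>\<omega>. Y i \<omega> * Y j \<omega>)"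
    and E1: "\<And>i. i \<ge> 1 \<Longrightarrow> expectation (Y i) = \<mu>"
    and E2: "\<And>i. i \<ge> 1 \<Longrightarrow> expectation (\<lambda>\<omega>. Y i \<omega> * Y i \<omega>) = s"
    and E12: "\<And>i j. i \<ge> 1 \<Longrightarrow> j \<ge> 1 \<Longrightarrow> i \<noteq> j \<Longrightarrow> expectation (\<lambda>\<omega>. Y i \<omega> * Y j \<omega>) = \<mu>\<^sup>2"
  shows "conv_in_prob M (\<lambda>n \<omega>. (\<Sum>i\<in>{1..n}. Y i \<omega>) / real n) \<mu>"
  unfolding conv_in_prob_def
proof (intro conjI allI impI)
  show "(\<lambda>\<omega>. (\<Sum>i\<in>{1..n}. Y i \<omega>) / real n) \<in> borel_measurable M" for n
    using meas by (intro borel_measurable_divide borel_measurable_sum) auto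
next
  fix e :: real assume "e > 0"
  have bound: "prob {\<omega>\<in>space M. e < \<bar>(\<Sum>i\<in>{1..n}. Y i \<omega>) / real n - \<mu>\<bar>} \<le> (s - \<mu>\<^sup>2) / e\<^sup>2 / real n"
    if "1 \<le> n" for n
  proof -
    define S where "S \<omega> = (\<Sum>i\<in>{1..n}. Y i \<omega> - \<mu>)" for \<omega>
    have S_meas [measurable]: "S \<in> borel_measurable M"
      unfolding S_def using meas by (intro borel_measurable_sum borel_measurable_diff) auto
    have sq: "integrable M (\<lambda>\<omega>. (S \<omega>)\<^sup>2)" "expectation (\<lambda>\<omega>. (S \<omega>)\<^sup>2) = real n * (s - \<mu>\<^sup>2)"
      unfolding S_def using expectation_square_sum_centered[where Y = Y, OF int1 int2 E1 E2 E12] by auto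
    have "\<bar>(\<Sum>i\<in>{1..n}. Y i \<omega>) / real n - \<mu>\<bar> = \<bar>S \<omega>\<bar> / real n" for \<omega>
    proof -
      have "(\<Sum>i\<in>{1..n}. Y i \<omega>) / real n - \<mu> = S \<omega> / real n"
        using that by (simp add: S_def sum_subtractf field_simps)
      then show ?thesis by (simp add: abs_divide)
    qed
    then have "{\<omega>\<in>space M. e < \<bar>(\<Sum>i\<in>{1..n}. Y i \<omega>) / real n - \<mu>\<bar>} \<subseteq> {\<omega>\<in>space M. real n * e \<le> \<bar>S \<omega>\<bar>}"
      using that by (auto simp: pos_less_divide_eq mult.commute)
    then have "prob {\<omega>\<in>space M. e < \<bar>(\<Sum>i\<in>{1..n}. Y i \<omega>) / real n - \<mu>\<bar>}
        \<le> prob {\<omega>\<in>space M. real n * e \<le> \<bar>S \<omega>\<bar>}"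
      by (rule finite_measure_mono) measurable
    also have "\<dots> \<le> expectation (\<lambda>\<omega>. (S \<omega>)\<^sup>2) / (real n * e)\<^sup>2"
      using S_meas sq(1) that \<open>e > 0\<close> by (intro second_moment_method) auto
    also have "\<dots> = (s - \<mu>\<^sup>2) / e\<^sup>2 / real n"
      unfolding sq(2) using that \<open>e > 0\<close> by (simp add: power2_eq_square field_simps)
    finally show ?thesis .
  qed
  show "(\<lambda>n. prob {\<omega>\<in>space M. e < \<bar>(\<Sum>i\<in>{1..n}. Y i \<omega>) / real n - \<mu>\<bar>}) \<longlonglongrightarrow> 0"
    by (rule tendsto_sandwich[OF always_eventually eventually_sequentiallyI[of 1] tendsto_const
          lim_const_over_n[of "(s - \<mu>\<^sup>2) / e\<^sup>2"]])
      (use bound in auto)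
qed

end

lemma sum_trim_idx_eq_atLeastLessThan:
  "(\<Sum>i\<in>trim_idx a b n. f (i - 1)) = (\<Sum>j\<in>{nat \<lfloor>real n * a\<rfloor>..<nat \<lfloor>real n * b\<rfloor>}. f j)"
  unfolding trim_idx_def by (rule sum.reindex_bij_witness[of _ Suc "\<lambda>i. i - 1"]) auto

lemma trim_mean_eq_sum_ord_idx:
  "trim_mean v x a b n
    = (\<Sum>j\<in>{nat \<lfloor>real n * a\<rfloor>..<nat \<lfloor>real n * b\<rfloor>}. x (ord_idx v n ! j)) / real (m_n a b n)"
  unfolding trim_mean_def conc_def
  using sum_trim_idx_eq_atLeastLessThan[of "\<lambda>j. x (ord_idx v n ! j)"] by simp

lemma trim_mean_add:
  "trim_mean v (\<lambda>i. x i + y i) a b n = trim_mean v x a b n + trim_mean v y a b n"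
  unfolding trim_mean_def conc_def by (simp add: sum.distrib add_divide_distrib)

lemma trim_mean_scale:
  "trim_mean v (\<lambda>i. c * x i) a b n = c * trim_mean v x a b n"
  unfolding trim_mean_def conc_def by (simp add: sum_distrib_left)

lemma trim_cov_eq:
  "trim_cov v x y a b n = trim_mean v (\<lambda>i. x i * y i) a b n - trim_mean v x a b n * trim_mean v y a b n"
proof (cases "m_n a b n = 0")
  case True
  then show ?thesis by (simp add: trim_cov_def trim_mean_def)
next
  case False
  let ?m = "real (m_n a b n)" and ?I = "trim_idx a b n"
  let ?x = "\<lambda>i. conc v x n i" and ?y = "\<lambda>i. conc v y n i"
  have card: "real (card ?I) = ?m" by (simp add: trim_idx_def m_n_def)
  have "(\<Sum>i\<in>?I. (?x i - trim_mean v x a b n) * (?y i - trim_mean v y a b n))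
      = (\<Sum>i\<in>?I. ?x i * ?y i) - trim_mean v y a b n * (\<Sum>i\<in>?I. ?x i)
        - trim_mean v x a b n * (\<Sum>i\<in>?I. ?y i) + ?m * (trim_mean v x a b n * trim_mean v y a b n)"
    by (simp add: algebra_simps sum.distrib sum_subtractf sum_distrib_left card[symmetric])
  also have "\<dots> = (\<Sum>i\<in>?I. ?x i * ?y i) - ?m * (trim_mean v x a b n * trim_mean v y a b n)"
    using False by (simp add: trim_mean_def field_simps)
  finally show ?thesis
    using False by (simp add: trim_cov_def trim_mean_def conc_def diff_divide_distrib)
qed

lemma ord_idx_nth_mem: "j < n \<Longrightarrow> ord_idx v n ! j \<in> {1..n}"
  using nth_mem[of j "ord_idx v n"] by (simp add: ord_idx_def del: upt_Suc)

lemma nat_floor_mult_over_n_tendsto: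
  assumes "0 \<le> a"
  shows "(\<lambda>n. real (nat \<lfloor>real n * a\<rfloor>) / real n) \<longlonglongrightarrow> a"
proof (rule tendsto_sandwich[of "\<lambda>n. a - 1 / real n" _ _ "\<lambda>n. a"])
  have floor: "real (nat \<lfloor>real n * a\<rfloor>) = of_int \<lfloor>real n * a\<rfloor>" for n
    using assms by simp
  show "eventually (\<lambda>n. a - 1 / real n \<le> real (nat \<lfloor>real n * a\<rfloor>) / real n) sequentially"
  proof (rule eventually_sequentiallyI[of 1])
    fix n :: nat assume "n \<ge> 1"
    have "(real n * a - 1) / real n \<le> of_int \<lfloor>real n * a\<rfloor> / real n"
      by (intro divide_right_mono) linarith+
    with \<open>n \<ge> 1\<close> show "a - 1 / real n \<le> real (nat \<lfloor>real n * a\<rfloor>) / real n"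
      unfolding floor by (simp add: diff_divide_distrib)
  qed
  show "eventually (\<lambda>n. real (nat \<lfloor>real n * a\<rfloor>) / real n \<le> a) sequentially"
  proof (rule eventually_sequentiallyI[of 1])
    fix n :: nat assume "n \<ge> 1"
    have "of_int \<lfloor>real n * a\<rfloor> / real n \<le> real n * a / real n"
      by (intro divide_right_mono) linarith+
    with \<open>n \<ge> 1\<close> show "real (nat \<lfloor>real n * a\<rfloor>) / real n \<le> a"
      unfolding floor by simp
  qed
  show "(\<lambda>n. a - 1 / real n) \<longlonglongrightarrow> a"
    using tendsto_diff[OF tendsto_const lim_const_over_n[of 1]] by simp
qed simp

section \<open>Independent pairs of standard normal variables\<close>

definition std_normal_mean :: "(real \<Rightarrow> real) \<Rightarrow> real" where
  "std_normal_mean g = (\<integral>x. std_normal_density x * g x \<partial>lborel)"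

definition std_normal_square_integrable :: "(real \<Rightarrow> real) \<Rightarrow> bool" where
  "std_normal_square_integrable g \<longleftrightarrow> g \<in> borel_measurable borel
     \<and> integrable lborel (\<lambda>x. std_normal_density x * g x)
     \<and> integrable lborel (\<lambda>x. std_normal_density x * (g x)\<^sup>2)"

lemma std_normal_square_integrable_power: "std_normal_square_integrable (\<lambda>x. x ^ p)"
  unfolding std_normal_square_integrable_def
  using integrable_std_normal_moment[of p] integrable_std_normal_moment[of "2 * p"]
  by (simp add: power_mult[symmetric] mult.commute)

lemma std_normal_square_integrable_indicator_mult:
  assumes "std_normal_square_integrable g" "S \<in> sets borel"
  shows "std_normal_square_integrable (\<lambda>x. indicator S x * g x)"
proof -
  have "(\<lambda>x. std_normal_density x * (indicator S x * g x)) = (\<lambda>x. (std_normal_density x * g x) * indicator S x)"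
    "(\<lambda>x. std_normal_density x * (indicator S x * g x)\<^sup>2) = (\<lambda>x. (std_normal_density x * (g x)\<^sup>2) * indicator S x)"
    by (auto simp: fun_eq_iff indicator_def)
  then show ?thesis
    using assms unfolding std_normal_square_integrable_def
    by (auto intro!: integrable_real_mult_indicator)
qed

lemma std_normal_mean_nonneg: "(\<And>x. 0 \<le> g x) \<Longrightarrow> 0 \<le> std_normal_mean g"
  unfolding std_normal_mean_def by (intro Bochner_Integration.integral_nonneg) simp

lemma std_normal_mean_moments:
  "std_normal_mean (\<lambda>x. 1) = 1" "std_normal_mean (\<lambda>x. x) = 0" "std_normal_mean (\<lambda>x. x\<^sup>2) = 1"
  unfolding std_normal_mean_def
  using integral_std_normal_moment_odd[of 0] integral_std_normal_moment_even[of 1] by simp_all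

lemma std_normal_mean_indicator_power:
  assumes "0 \<le> a" "a < b" "b \<le> 1"
  shows "std_normal_mean (\<lambda>x. indicator (A_V a b) x * x ^ p) = (b - a) * lam p a b"
proof -
  have "std_normal_mean (\<lambda>x. indicator (A_V a b) x * x ^ p) = (LBINT x:A_V a b. x ^ p * std_normal_density x)"
    unfolding std_normal_mean_def set_lebesgue_integral_def by (intro Bochner_Integration.integral_cong) auto
  then show ?thesis
    using assms by (simp add: lam_def integral_std_normal_density_A_V)
qed

lemma (in prob_space) distributed_std_normal_expectation:
  assumes "distributed M lborel X std_normal_density" "g \<in> borel_measurable borel"
    "integrable lborel (\<lambda>x. std_normal_density x * g x)"
  shows "integrable M (\<lambda>\<omega>. g (X \<omega>))" "expectation (\<lambda>\<omega>. g (X \<omega>)) = std_normal_mean g"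
  using distributed_integrable[OF assms(1), of g] distributed_integral[OF assms(1), of g] assms(2,3)
  by (simp_all add: std_normal_mean_def)

locale std_normal_pairs = prob_space +
  fixes V W :: "nat \<Rightarrow> 'a \<Rightarrow> real"
  assumes indep: "indep_vars (\<lambda>_. borel) (\<lambda>k. case k of Inl i \<Rightarrow> V i | Inr i \<Rightarrow> W i)
      (Inl ` {(1::nat)..} \<union> Inr ` {(1::nat)..})"
    and distributed_V: "\<And>i. i \<ge> 1 \<Longrightarrow> distributed M lborel (V i) std_normal_density"
    and distributed_W: "\<And>i. i \<ge> 1 \<Longrightarrow> distributed M lborel (W i) std_normal_density"
begin

lemma measurable_V [measurable]: "i \<ge> 1 \<Longrightarrow> V i \<in> borel_measurable M"
  using indep unfolding indep_vars_def2 by (auto dest!: bspec[of _ _ "Inl i"])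

lemma measurable_W [measurable]: "i \<ge> 1 \<Longrightarrow> W i \<in> borel_measurable M"
  using indep unfolding indep_vars_def2 by (auto dest!: bspec[of _ _ "Inr i"])

lemma expectation_prod_V_W:
  fixes \<alpha> \<beta> :: "real \<Rightarrow> real"
  assumes I: "finite I" "I \<subseteq> {1..}"
    and \<alpha>: "\<alpha> \<in> borel_measurable borel" "integrable lborel (\<lambda>x. std_normal_density x * \<alpha> x)"
    and \<beta>: "\<beta> \<in> borel_measurable borel" "integrable lborel (\<lambda>x. std_normal_density x * \<beta> x)"
  shows "integrable M (\<lambda>\<omega>. \<Prod>i\<in>I. \<alpha> (V i \<omega>) * \<beta> (W i \<omega>))"
    and "expectation (\<lambda>\<omega>. \<Prod>i\<in>I. \<alpha> (V i \<omega>) * \<beta> (W i \<omega>))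
      = (std_normal_mean \<alpha> * std_normal_mean \<beta>) ^ card I"
proof -
  let ?J = "Inl ` I \<union> Inr ` I" and ?Z = "\<lambda>k. case k of Inl i \<Rightarrow> V i | Inr i \<Rightarrow> W i"
  define g where "g k = (case k of Inl _ \<Rightarrow> \<alpha> | Inr _ \<Rightarrow> \<beta>)" for k :: "nat + nat"
  have ind: "indep_vars (\<lambda>_. borel) (\<lambda>k \<omega>. g k (?Z k \<omega>)) ?J"
    using I \<alpha> \<beta> by (intro indep_vars_compose2[OF indep_vars_subset[OF indep]])
      (auto simp: g_def split: sum.split)
  have EV: "integrable M (\<lambda>\<omega>. \<alpha> (V i \<omega>))" "expectation (\<lambda>\<omega>. \<alpha> (V i \<omega>)) = std_normal_mean \<alpha>"
    and EW: "integrable M (\<lambda>\<omega>. \<beta> (W i \<omega>))" "expectation (\<lambda>\<omega>. \<beta> (W i \<omega>)) = std_normal_mean \<beta>"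
    if "i \<in> I" for i
    using that I \<alpha> \<beta> distributed_std_normal_expectation[OF distributed_V] distributed_std_normal_expectation[OF distributed_W]
    by auto
  have int: "integrable M (\<lambda>\<omega>. g k (?Z k \<omega>))" if "k \<in> ?J" for k
    using that EV EW by (auto simp: g_def)
  have split: "(\<Prod>k\<in>?J. f k) = (\<Prod>i\<in>I. f (Inl i) * f (Inr i))" for f :: "nat + nat \<Rightarrow> real"
  proof -
    have "(\<Prod>k\<in>?J. f k) = (\<Prod>k\<in>Inl ` I. f k) * (\<Prod>k\<in>Inr ` I. f k)"
      using I by (intro prod.union_disjoint) auto
    then show ?thesis by (simp add: prod.reindex prod.distrib)
  qed
  have "integrable M (\<lambda>\<omega>. \<Prod>k\<in>?J. g k (?Z k \<omega>))"
    using I int by (intro indep_vars_integrable[OF _ ind]) auto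
  then show "integrable M (\<lambda>\<omega>. \<Prod>i\<in>I. \<alpha> (V i \<omega>) * \<beta> (W i \<omega>))"
    by (simp add: split g_def)
  have "expectation (\<lambda>\<omega>. \<Prod>k\<in>?J. g k (?Z k \<omega>)) = (\<Prod>k\<in>?J. expectation (\<lambda>\<omega>. g k (?Z k \<omega>)))"
    using I int by (intro indep_vars_lebesgue_integral[OF _ ind]) auto
  then show "expectation (\<lambda>\<omega>. \<Prod>i\<in>I. \<alpha> (V i \<omega>) * \<beta> (W i \<omega>)) = (std_normal_mean \<alpha> * std_normal_mean \<beta>) ^ card I"
    using EV EW by (simp add: split g_def power_mult_distrib cong: prod.cong)
qed

theorem conv_in_prob_average_V_W:
  assumes "std_normal_square_integrable \<alpha>" "std_normal_square_integrable \<beta>"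
  shows "conv_in_prob M (\<lambda>n \<omega>. (\<Sum>i\<in>{1..n}. \<alpha> (V i \<omega>) * \<beta> (W i \<omega>)) / real n)
    (std_normal_mean \<alpha> * std_normal_mean \<beta>)"
proof (rule conv_in_prob_average_uncorrelated)
  note sq = assms[unfolded std_normal_square_integrable_def]
  note [measurable] = sq(1)[THEN conjunct1] sq(2)[THEN conjunct1]
  have sq_meas: "(\<lambda>x. (\<alpha> x)\<^sup>2) \<in> borel_measurable borel" "(\<lambda>x. (\<beta> x)\<^sup>2) \<in> borel_measurable borel"
    by measurable
  note single = expectation_prod_V_W[of "{i}" for i] and pair = expectation_prod_V_W[of "{i, j}" for i j]
  show "(\<lambda>\<omega>. \<alpha> (V i \<omega>) * \<beta> (W i \<omega>)) \<in> borel_measurable M" if "i \<ge> 1" for i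
    using that by measurable
  show "integrable M (\<lambda>\<omega>. \<alpha> (V i \<omega>) * \<beta> (W i \<omega>))"
    "expectation (\<lambda>\<omega>. \<alpha> (V i \<omega>) * \<beta> (W i \<omega>)) = std_normal_mean \<alpha> * std_normal_mean \<beta>" if "i \<ge> 1" for i
    using single[of i \<alpha> \<beta>] that sq by auto
  have sq_prod: "\<alpha> (V i \<omega>) * \<beta> (W i \<omega>) * (\<alpha> (V i \<omega>) * \<beta> (W i \<omega>)) = (\<alpha> (V i \<omega>))\<^sup>2 * (\<beta> (W i \<omega>))\<^sup>2" for i \<omega>
    by (simp add: power2_eq_square)
  show "integrable M (\<lambda>\<omega>. \<alpha> (V i \<omega>) * \<beta> (W i \<omega>) * (\<alpha> (V j \<omega>) * \<beta> (W j \<omega>)))" if "i \<ge> 1" "j \<ge> 1" for i j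
  proof (cases "i = j")
    case True
    then show ?thesis
      using that single[of i "\<lambda>x. (\<alpha> x)\<^sup>2" "\<lambda>x. (\<beta> x)\<^sup>2"] sq sq_meas by (simp add: sq_prod)
  next
    case False
    then show ?thesis
      using that pair[of i j \<alpha> \<beta>] sq by (simp add: mult_ac)
  qed
  show "expectation (\<lambda>\<omega>. \<alpha> (V i \<omega>) * \<beta> (W i \<omega>) * (\<alpha> (V i \<omega>) * \<beta> (W i \<omega>)))
      = std_normal_mean (\<lambda>x. (\<alpha> x)\<^sup>2) * std_normal_mean (\<lambda>x. (\<beta> x)\<^sup>2)" if "i \<ge> 1" for i
    using that single[of i "\<lambda>x. (\<alpha> x)\<^sup>2" "\<lambda>x. (\<beta> x)\<^sup>2"] sq sq_meas by (simp add: sq_prod)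
  show "expectation (\<lambda>\<omega>. \<alpha> (V i \<omega>) * \<beta> (W i \<omega>) * (\<alpha> (V j \<omega>) * \<beta> (W j \<omega>)))
      = (std_normal_mean \<alpha> * std_normal_mean \<beta>)\<^sup>2" if "i \<ge> 1" "j \<ge> 1" "i \<noteq> j" for i j
    using that pair[of i j \<alpha> \<beta>] sq by (simp add: mult_ac power2_eq_square)
qed

end

section \<open>Trimmed means of concomitants\<close>

locale trimmed_std_normal_pairs = std_normal_pairs +
  fixes a b :: real
  assumes a_nonneg: "0 \<le> a" and a_less_b: "a < b" and b_le_1: "b \<le> 1"
begin

abbreviation lo :: "nat \<Rightarrow> nat" where "lo n \<equiv> nat \<lfloor>real n * a\<rfloor>"
abbreviation hi :: "nat \<Rightarrow> nat" where "hi n \<equiv> nat \<lfloor>real n * b\<rfloor>"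

lemma lo_le_hi: "lo n \<le> hi n"
  using a_less_b by (intro nat_mono floor_mono mult_left_mono) auto

lemma hi_le: "hi n \<le> n"
proof -
  have "real n * b \<le> real n" using b_le_1 by (simp add: mult_left_le)
  then show ?thesis by linarith
qed

lemma m_n_over_n_tendsto: "(\<lambda>n. real (m_n a b n) / real n) \<longlonglongrightarrow> b - a"
proof -
  have "(\<lambda>n. real (hi n) / real n - real (lo n) / real n) \<longlonglongrightarrow> b - a"
    using a_nonneg a_less_b by (intro tendsto_diff nat_floor_mult_over_n_tendsto) auto
  then show ?thesis
    using lo_le_hi by (simp add: m_n_def of_nat_diff diff_divide_distrib)
qed

lemma measurable_sum_ord_idx:
  fixes X :: "nat \<Rightarrow> 'a \<Rightarrow> real"
  assumes X: "\<And>i. i \<ge> 1 \<Longrightarrow> X i \<in> borel_measurable M" and J: "J \<subseteq> {..<n}"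
  shows "(\<lambda>\<omega>. \<Sum>j\<in>J. X (ord_idx (\<lambda>i. V i \<omega>) n ! j) \<omega>) \<in> borel_measurable M"
proof -
  \<comment> \<open>Index 0 never occurs, so V and X may be replaced by versions that are measurable at every index.\<close>
  have ord: "ord_idx (\<lambda>i. V i \<omega>) n = sort_key (\<lambda>i. V (max 1 i) \<omega>) [1..<n+1]" for \<omega>
    unfolding ord_idx_def by (rule sort_key_cong) (auto simp: max_def)
  define f where "f L \<omega> = (\<Sum>j\<in>J. X (max 1 (L ! j)) \<omega>)" for L \<omega>
  have "(\<lambda>\<omega>. f (sort_key (\<lambda>i. V (max 1 i) \<omega>) [1..<n+1]) \<omega>) \<in> borel_measurable M"
  proof (rule measurable_compose_countable[OF _ measurable_sort_key])
    show "(\<lambda>\<omega>. f L \<omega>) \<in> borel_measurable M" for L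
      unfolding f_def by (intro borel_measurable_sum X) simp
  qed measurable
  moreover have "f (ord_idx (\<lambda>i. V i \<omega>) n) \<omega> = (\<Sum>j\<in>J. X (ord_idx (\<lambda>i. V i \<omega>) n ! j) \<omega>)" for \<omega>
    unfolding f_def
  proof (intro sum.cong refl)
    fix j assume "j \<in> J"
    then have "1 \<le> ord_idx (\<lambda>i. V i \<omega>) n ! j"
      using J ord_idx_nth_mem[of j n] by auto
    then show "X (max 1 (ord_idx (\<lambda>i. V i \<omega>) n ! j)) \<omega> = X (ord_idx (\<lambda>i. V i \<omega>) n ! j) \<omega>"
      by (simp add: max_def)
  qed
  ultimately show ?thesis unfolding ord by simp
qed

lemma conv_in_prob_fraction_V:
  assumes [measurable]: "S \<in> sets borel"
  shows "conv_in_prob M (\<lambda>n \<omega>. real (card {k\<in>{1..n}. V k \<omega> \<in> S}) / real n) (measure std_normal S)"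
proof -
  have "std_normal_square_integrable (indicator S)"
    using std_normal_square_integrable_indicator_mult[OF std_normal_square_integrable_power[of 0]] by simp
  from conv_in_prob_average_V_W[OF this std_normal_square_integrable_power[of 0]]
  have "conv_in_prob M (\<lambda>n \<omega>. (\<Sum>k\<in>{1..n}. indicator S (V k \<omega>)) / real n) (std_normal_mean (indicator S))"
    using std_normal_mean_moments(1) by simp
  moreover have "(\<Sum>k\<in>{1..n}. indicator S (V k \<omega>)) = real (card {k\<in>{1..n}. V k \<omega> \<in> S})" for n \<omega>
    by (simp add: indicator_def sum.If_cases) (rule arg_cong[where f = card], auto)
  moreover have "std_normal_mean (indicator S) = measure std_normal S"
    by (simp add: std_normal_mean_def measure_std_normal set_lebesgue_integral_def mult.commute)
  ultimately show ?thesis by simp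
qed

lemma conv_in_prob_rank_deviation:
  "conv_in_prob M (\<lambda>n \<omega>. \<bar>real (lo n) / real n - real (card {k\<in>{1..n}. Phi (V k \<omega>) \<le> a}) / real n\<bar>
     + \<bar>real (hi n) / real n - real (card {k\<in>{1..n}. Phi (V k \<omega>) < b}) / real n\<bar>) 0"
proof -
  have "conv_in_prob M (\<lambda>n \<omega>. real (lo n) / real n - real (card {k\<in>{1..n}. V k \<omega> \<in> {x. Phi x \<le> a}}) / real n)
      (a - measure std_normal {x. Phi x \<le> a})"
    using a_nonneg by (intro conv_in_prob_diff conv_in_prob_const conv_in_prob_fraction_V
        nat_floor_mult_over_n_tendsto) auto
  moreover have "conv_in_prob M (\<lambda>n \<omega>. real (hi n) / real n - real (card {k\<in>{1..n}. V k \<omega> \<in> {x. Phi x < b}}) / real n)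
      (b - measure std_normal {x. Phi x < b})"
    using a_nonneg a_less_b by (intro conv_in_prob_diff conv_in_prob_const conv_in_prob_fraction_V
        nat_floor_mult_over_n_tendsto) auto
  ultimately have "conv_in_prob M (\<lambda>n \<omega>. real (lo n) / real n - real (card {k\<in>{1..n}. Phi (V k \<omega>) \<le> a}) / real n) 0"
    "conv_in_prob M (\<lambda>n \<omega>. real (hi n) / real n - real (card {k\<in>{1..n}. Phi (V k \<omega>) < b}) / real n) 0"
    using a_nonneg a_less_b b_le_1 by (simp_all add: measure_Phi_le measure_Phi_less)
  note lims = this
  have "conv_in_prob M (\<lambda>n \<omega>. \<bar>real (lo n) / real n - real (card {k\<in>{1..n}. Phi (V k \<omega>) \<le> a}) / real n\<bar>
     + \<bar>real (hi n) / real n - real (card {k\<in>{1..n}. Phi (V k \<omega>) < b}) / real n\<bar>) (\<bar>0\<bar> + \<bar>0\<bar>)"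
    by (rule conv_in_prob_continuous2[where f = "\<lambda>x y. \<bar>x\<bar> + \<bar>y\<bar>", OF lims])
      (auto intro!: continuous_intros borel_measurable_add borel_measurable_abs
        conv_in_prob_measurable[OF lims(1)] conv_in_prob_measurable[OF lims(2)])
  then show ?thesis by simp
qed

lemma conv_in_prob_trimmed_minus_selected:
  assumes G: "std_normal_square_integrable G" and H: "std_normal_square_integrable H"
  shows "conv_in_prob M (\<lambda>n \<omega>.
    ((\<Sum>j\<in>{lo n..<hi n}. G (V (ord_idx (\<lambda>i. V i \<omega>) n ! j) \<omega>) * H (W (ord_idx (\<lambda>i. V i \<omega>) n ! j) \<omega>))
     - (\<Sum>k\<in>{1..n}. G (V k \<omega>) * H (W k \<omega>) * indicator (A_V a b) (V k \<omega>))) / real n) 0"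
proof (rule conv_in_prob_dominated[OF _ conv_in_prob_rank_deviation])
  note [measurable] = G[unfolded std_normal_square_integrable_def, THEN conjunct1]
    H[unfolded std_normal_square_integrable_def, THEN conjunct1]
  let ?h = "\<lambda>\<omega> k. G (V k \<omega>) * H (W k \<omega>)"
  have sq: "integrable M (\<lambda>\<omega>. (?h \<omega> k)\<^sup>2)"
    "expectation (\<lambda>\<omega>. (?h \<omega> k)\<^sup>2) = std_normal_mean (\<lambda>x. (G x)\<^sup>2) * std_normal_mean (\<lambda>x. (H x)\<^sup>2)"
    if "k \<ge> 1" for k
    using expectation_prod_V_W[of "{k}" "\<lambda>x. (G x)\<^sup>2" "\<lambda>x. (H x)\<^sup>2"] that G H
    by (simp_all add: std_normal_square_integrable_def power_mult_distrib)
  show "(\<lambda>\<omega>. ((\<Sum>j\<in>{lo n..<hi n}. ?h \<omega> (ord_idx (\<lambda>i. V i \<omega>) n ! j))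
      - (\<Sum>k\<in>{1..n}. ?h \<omega> k * indicator (A_V a b) (V k \<omega>))) / real n) \<in> borel_measurable M" for n
  proof -
    have h: "(\<lambda>\<omega>. ?h \<omega> k) \<in> borel_measurable M"
      and hA: "(\<lambda>\<omega>. ?h \<omega> k * indicator (A_V a b) (V k \<omega>)) \<in> borel_measurable M" if "k \<ge> 1" for k
      using that by measurable
    have "{lo n..<hi n} \<subseteq> {..<n}" using hi_le[of n] by auto
    then show ?thesis
      by (intro borel_measurable_divide borel_measurable_diff measurable_sum_ord_idx borel_measurable_sum
          h hA) auto
  qed
  show "integrable M (\<lambda>\<omega>. 2 * (\<Sum>k\<in>{1..n}. (?h \<omega> k)\<^sup>2) / real n)" for n
    using sq by (intro integrable_divide integrable_mult_right Bochner_Integration.integrable_sum) auto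
  show "0 \<le> 2 * (\<Sum>k\<in>{1..n}. (?h \<omega> k)\<^sup>2) / real n" for n \<omega>
    by (simp add: sum_nonneg)
  show "expectation (\<lambda>\<omega>. 2 * (\<Sum>k\<in>{1..n}. (?h \<omega> k)\<^sup>2) / real n)
      \<le> 2 * (std_normal_mean (\<lambda>x. (G x)\<^sup>2) * std_normal_mean (\<lambda>x. (H x)\<^sup>2))" for n
    using sq by (simp add: Bochner_Integration.integral_sum std_normal_mean_nonneg)
  show "\<bar>((\<Sum>j\<in>{lo n..<hi n}. ?h \<omega> (ord_idx (\<lambda>i. V i \<omega>) n ! j))
      - (\<Sum>k\<in>{1..n}. ?h \<omega> k * indicator (A_V a b) (V k \<omega>))) / real n - 0\<bar>
    \<le> c * (\<bar>real (lo n) / real n - real (card {k\<in>{1..n}. Phi (V k \<omega>) \<le> a}) / real n\<bar>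
           + \<bar>real (hi n) / real n - real (card {k\<in>{1..n}. Phi (V k \<omega>) < b}) / real n\<bar>)
      + 2 * (\<Sum>k\<in>{1..n}. (?h \<omega> k)\<^sup>2) / real n / c"
    if "c > 0" for c n \<omega>
  proof -
    have "\<bar>(\<Sum>j\<in>{lo n..<hi n}. ?h \<omega> (ord_idx (\<lambda>i. V i \<omega>) n ! j))
        - (\<Sum>k\<in>{1..n}. ?h \<omega> k * indicator (A_V a b) (V k \<omega>))\<bar> / real n
      \<le> (c * (\<bar>real (lo n) - real (card {k\<in>{1..n}. Phi (V k \<omega>) \<le> a})\<bar>
           + \<bar>real (hi n) - real (card {k\<in>{1..n}. Phi (V k \<omega>) < b})\<bar>)
         + 2 * (\<Sum>k\<in>{1..n}. (?h \<omega> k)\<^sup>2) / c) / real n"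
      using sum_sort_key_A_V_approx[OF lo_le_hi hi_le a_less_b that, where v = "\<lambda>i. V i \<omega>" and h = "?h \<omega>"]
      by (intro divide_right_mono) (simp_all add: ord_idx_def del: upt_Suc)
    then show ?thesis
      by (simp add: abs_divide diff_divide_distrib[symmetric] add_divide_distrib distrib_left mult.commute)
  qed
qed

theorem conv_in_prob_trimmed_sum:
  assumes G: "std_normal_square_integrable G" and H: "std_normal_square_integrable H"
  shows "conv_in_prob M (\<lambda>n \<omega>.
    (\<Sum>j\<in>{lo n..<hi n}. G (V (ord_idx (\<lambda>i. V i \<omega>) n ! j) \<omega>) * H (W (ord_idx (\<lambda>i. V i \<omega>) n ! j) \<omega>))
      / real (m_n a b n))
    (std_normal_mean (\<lambda>x. indicator (A_V a b) x * G x) * std_normal_mean H / (b - a))"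
proof -
  let ?T = "\<lambda>n \<omega>. \<Sum>j\<in>{lo n..<hi n}. G (V (ord_idx (\<lambda>i. V i \<omega>) n ! j) \<omega>) * H (W (ord_idx (\<lambda>i. V i \<omega>) n ! j) \<omega>)"
    and ?U = "\<lambda>n \<omega>. \<Sum>k\<in>{1..n}. G (V k \<omega>) * H (W k \<omega>) * indicator (A_V a b) (V k \<omega>)"
  let ?\<mu> = "std_normal_mean (\<lambda>x. indicator (A_V a b) x * G x) * std_normal_mean H"
  have "conv_in_prob M (\<lambda>n \<omega>. (\<Sum>k\<in>{1..n}. indicator (A_V a b) (V k \<omega>) * G (V k \<omega>) * H (W k \<omega>)) / real n) ?\<mu>"
    using conv_in_prob_average_V_W[OF std_normal_square_integrable_indicator_mult[OF G] H] by simp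
  then have "conv_in_prob M (\<lambda>n \<omega>. (?T n \<omega> - ?U n \<omega>) / real n + ?U n \<omega> / real n) (0 + ?\<mu>)"
    by (intro conv_in_prob_add conv_in_prob_trimmed_minus_selected G H) (simp_all add: mult_ac)
  then have "conv_in_prob M (\<lambda>n \<omega>. ?T n \<omega> / real n) ?\<mu>"
    by (simp add: diff_divide_distrib)
  moreover have "conv_in_prob M (\<lambda>n \<omega>. real n / real (m_n a b n)) (inverse (b - a))"
    using m_n_over_n_tendsto a_less_b by (intro conv_in_prob_const) (auto dest: tendsto_inverse)
  ultimately have "conv_in_prob M (\<lambda>n \<omega>. ?T n \<omega> / real n * (real n / real (m_n a b n))) (?\<mu> * inverse (b - a))"
    by (rule conv_in_prob_mult)
  moreover have "(\<lambda>n \<omega>. ?T n \<omega> / real n * (real n / real (m_n a b n))) = (\<lambda>n \<omega>. ?T n \<omega> / real (m_n a b n))"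
    by (intro ext) (simp add: field_split_simps)
  ultimately show ?thesis by (simp only: divide_inverse)
qed

definition trim_moment :: "nat \<Rightarrow> nat \<Rightarrow> nat \<Rightarrow> 'a \<Rightarrow> real" where
  "trim_moment p q n \<omega> = trim_mean (\<lambda>i. V i \<omega>) (\<lambda>i. V i \<omega> ^ p * W i \<omega> ^ q) a b n"

lemma conv_in_prob_trim_moment:
  "conv_in_prob M (trim_moment p q) (lam p a b * std_normal_mean (\<lambda>x. x ^ q))"
  using conv_in_prob_trimmed_sum[OF std_normal_square_integrable_power std_normal_square_integrable_power,
      of p q] a_nonneg a_less_b b_le_1
  by (simp add: trim_moment_def[abs_def] trim_mean_eq_sum_ord_idx std_normal_mean_indicator_power)

lemma lam_0: "lam 0 a b = 1"
  using a_nonneg a_less_b b_le_1 by (simp add: lam_def integral_std_normal_density_A_V)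

lemma trim_mean_affine:
  "trim_mean (\<lambda>i. V i \<omega>) (\<lambda>i. c + d * V i \<omega> + e * W i \<omega>) a b n
    = c * trim_moment 0 0 n \<omega> + d * trim_moment 1 0 n \<omega> + e * trim_moment 0 1 n \<omega>"
proof -
  have "(\<lambda>i. c + d * V i \<omega> + e * W i \<omega>)
      = (\<lambda>i. c * (V i \<omega> ^ 0 * W i \<omega> ^ 0) + d * (V i \<omega> ^ 1 * W i \<omega> ^ 0) + e * (V i \<omega> ^ 0 * W i \<omega> ^ 1))"
    by simp
  then show ?thesis by (simp only: trim_mean_add trim_mean_scale trim_moment_def)
qed

lemma trim_mean_affine_product:
  "trim_mean (\<lambda>i. V i \<omega>) (\<lambda>i. (c + d * V i \<omega> + e * W i \<omega>) * (c' + d' * V i \<omega> + e' * W i \<omega>)) a b n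
    = c * c' * trim_moment 0 0 n \<omega> + (c * d' + d * c') * trim_moment 1 0 n \<omega>
      + (c * e' + e * c') * trim_moment 0 1 n \<omega> + d * d' * trim_moment 2 0 n \<omega>
      + (d * e' + e * d') * trim_moment 1 1 n \<omega> + e * e' * trim_moment 0 2 n \<omega>"
proof -
  have "(\<lambda>i. (c + d * V i \<omega> + e * W i \<omega>) * (c' + d' * V i \<omega> + e' * W i \<omega>))
      = (\<lambda>i. c * c' * (V i \<omega> ^ 0 * W i \<omega> ^ 0) + (c * d' + d * c') * (V i \<omega> ^ 1 * W i \<omega> ^ 0)
          + (c * e' + e * c') * (V i \<omega> ^ 0 * W i \<omega> ^ 1) + d * d' * (V i \<omega> ^ 2 * W i \<omega> ^ 0)
          + (d * e' + e * d') * (V i \<omega> ^ 1 * W i \<omega> ^ 1) + e * e' * (V i \<omega> ^ 0 * W i \<omega> ^ 2))"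
    by (simp add: algebra_simps power2_eq_square)
  then show ?thesis by (simp only: trim_mean_add trim_mean_scale trim_moment_def)
qed

lemma conv_in_prob_trim_mean_affine:
  "conv_in_prob M (\<lambda>n \<omega>. trim_mean (\<lambda>i. V i \<omega>) (\<lambda>i. c + d * V i \<omega> + e * W i \<omega>) a b n)
    (c + d * lam 1 a b)"
proof -
  have "conv_in_prob M (\<lambda>n \<omega>. c * trim_moment 0 0 n \<omega> + d * trim_moment 1 0 n \<omega> + e * trim_moment 0 1 n \<omega>)
      (c * (lam 0 a b * std_normal_mean (\<lambda>x. x ^ 0)) + d * (lam 1 a b * std_normal_mean (\<lambda>x. x ^ 0))
        + e * (lam 0 a b * std_normal_mean (\<lambda>x. x ^ 1)))"
    by (intro conv_in_prob_add conv_in_prob_scale conv_in_prob_trim_moment)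
  then show ?thesis
    by (simp add: trim_mean_affine lam_0 std_normal_mean_moments)
qed

lemma conv_in_prob_trim_cov_affine:
  "conv_in_prob M (\<lambda>n \<omega>. trim_cov (\<lambda>i. V i \<omega>) (\<lambda>i. c + d * V i \<omega> + e * W i \<omega>)
      (\<lambda>i. c' + d' * V i \<omega> + e' * W i \<omega>) a b n)
    (d * d' * (lam 2 a b - (lam 1 a b)\<^sup>2) + e * e')"
proof -
  have "conv_in_prob M (\<lambda>n \<omega>. (c * c' * trim_moment 0 0 n \<omega> + (c * d' + d * c') * trim_moment 1 0 n \<omega>
        + (c * e' + e * c') * trim_moment 0 1 n \<omega> + d * d' * trim_moment 2 0 n \<omega>
        + (d * e' + e * d') * trim_moment 1 1 n \<omega> + e * e' * trim_moment 0 2 n \<omega>)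
      - trim_mean (\<lambda>i. V i \<omega>) (\<lambda>i. c + d * V i \<omega> + e * W i \<omega>) a b n
        * trim_mean (\<lambda>i. V i \<omega>) (\<lambda>i. c' + d' * V i \<omega> + e' * W i \<omega>) a b n)
    ((c * c' * (lam 0 a b * std_normal_mean (\<lambda>x. x ^ 0)) + (c * d' + d * c') * (lam 1 a b * std_normal_mean (\<lambda>x. x ^ 0))
        + (c * e' + e * c') * (lam 0 a b * std_normal_mean (\<lambda>x. x ^ 1)) + d * d' * (lam 2 a b * std_normal_mean (\<lambda>x. x ^ 0))
        + (d * e' + e * d') * (lam 1 a b * std_normal_mean (\<lambda>x. x ^ 1)) + e * e' * (lam 0 a b * std_normal_mean (\<lambda>x. x ^ 2)))
      - (c + d * lam 1 a b) * (c' + d' * lam 1 a b))"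
    by (intro conv_in_prob_diff conv_in_prob_add conv_in_prob_scale conv_in_prob_mult
        conv_in_prob_trim_moment conv_in_prob_trim_mean_affine)
  moreover have "(c * c' * (lam 0 a b * std_normal_mean (\<lambda>x. x ^ 0)) + (c * d' + d * c') * (lam 1 a b * std_normal_mean (\<lambda>x. x ^ 0))
        + (c * e' + e * c') * (lam 0 a b * std_normal_mean (\<lambda>x. x ^ 1)) + d * d' * (lam 2 a b * std_normal_mean (\<lambda>x. x ^ 0))
        + (d * e' + e * d') * (lam 1 a b * std_normal_mean (\<lambda>x. x ^ 1)) + e * e' * (lam 0 a b * std_normal_mean (\<lambda>x. x ^ 2)))
      - (c + d * lam 1 a b) * (c' + d' * lam 1 a b)
    = d * d' * (lam 2 a b - (lam 1 a b)\<^sup>2) + e * e'"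
    using std_normal_mean_moments(3) by (simp add: lam_0 std_normal_mean_moments algebra_simps power2_eq_square)
  ultimately show ?thesis
    by (simp only: trim_cov_eq trim_mean_affine_product)
qed

end

theorem corollaryA4:
  fixes M :: "'a measure" and V W :: "nat \<Rightarrow> 'a \<Rightarrow> real"
    and a b mu1 mu2 sigma1 sigma2 gamma1 gamma2 :: real
  assumes "prob_space M"
    and indep: "prob_space.indep_vars M (\<lambda>_. borel) (\<lambda>k. case k of Inl i \<Rightarrow> V i | Inr i \<Rightarrow> W i)
                  (Inl ` {(1::nat)..} \<union> Inr ` {(1::nat)..})"
    and distV: "\<And>i. i \<ge> 1 \<Longrightarrow> distributed M lborel (V i) std_normal_density"
    and distW: "\<And>i. i \<ge> 1 \<Longrightarrow> distributed M lborel (W i) std_normal_density"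
    and ab: "0 \<le> a" "a < b" "b \<le> 1"
    and sig: "sigma1 > 0" "sigma2 > 0"
    and gam: "-pi \<le> gamma1" "gamma1 < pi" "-pi \<le> gamma2" "gamma2 < pi"
  defines "X1 \<equiv> \<lambda>i \<omega>. mu1 + sigma1 * (cos gamma1 * V i \<omega> + sin gamma1 * W i \<omega>)"
    and "X2 \<equiv> \<lambda>i \<omega>. mu2 + sigma2 * (cos gamma2 * V i \<omega> + sin gamma2 * W i \<omega>)"
  shows "conv_in_prob M (\<lambda>n \<omega>. trim_mean (\<lambda>i. V i \<omega>) (\<lambda>i. X1 i \<omega>) a b n)
           (mu1 + sigma1 * cos gamma1 * lam 1 a b)
       \<and> conv_in_prob M (\<lambda>n \<omega>. trim_mean (\<lambda>i. V i \<omega>) (\<lambda>i. X2 i \<omega>) a b n)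
           (mu2 + sigma2 * cos gamma2 * lam 1 a b)
       \<and> conv_in_prob M (\<lambda>n \<omega>. trim_cov (\<lambda>i. V i \<omega>) (\<lambda>i. X1 i \<omega>) (\<lambda>i. X2 i \<omega>) a b n)
           (sigma1 * sigma2 * (cos gamma1 * cos gamma2 * (lam 2 a b - (lam 1 a b)\<^sup>2)
                               + sin gamma1 * sin gamma2))"
proof -
  interpret trimmed_std_normal_pairs M V W a b
    unfolding trimmed_std_normal_pairs_def trimmed_std_normal_pairs_axioms_def
      std_normal_pairs_def std_normal_pairs_axioms_def
    using assms(1) indep distV distW ab by auto
  have affine: "X1 = (\<lambda>i \<omega>. mu1 + sigma1 * cos gamma1 * V i \<omega> + sigma1 * sin gamma1 * W i \<omega>)"
    "X2 = (\<lambda>i \<omega>. mu2 + sigma2 * cos gamma2 * V i \<omega> + sigma2 * sin gamma2 * W i \<omega>)"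
    unfolding X1_def X2_def by (simp_all add: fun_eq_iff algebra_simps)
  have "sigma1 * cos gamma1 * (sigma2 * cos gamma2) * (lam 2 a b - (lam 1 a b)\<^sup>2)
      + sigma1 * sin gamma1 * (sigma2 * sin gamma2)
    = sigma1 * sigma2 * (cos gamma1 * cos gamma2 * (lam 2 a b - (lam 1 a b)\<^sup>2) + sin gamma1 * sin gamma2)"
    by (simp add: algebra_simps)
  then show ?thesis
    using conv_in_prob_trim_mean_affine[of mu1 "sigma1 * cos gamma1" "sigma1 * sin gamma1"]
      conv_in_prob_trim_mean_affine[of mu2 "sigma2 * cos gamma2" "sigma2 * sin gamma2"]
      conv_in_prob_trim_cov_affine[of mu1 "sigma1 * cos gamma1" "sigma1 * sin gamma1"
        mu2 "sigma2 * cos gamma2" "sigma2 * sin gamma2"]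
    unfolding affine by (simp add: mult.assoc)
qed

end
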